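(* Let $$B= \begin{pmatrix} 1& 2& 2\\ 2&1& 2\\ 2&2& 3 \end{pmatrix}.$$ For every positive integer $n$, writing $B^n(3,4,5)^\top=(x,y,z)^\top$, the inradius $r_n$ of the triangle with side lengths $x,y,z$ is $$r_n=\frac{(3+2\sqrt{2})^{n+1}-(3-2\sqrt{2})^{n+1}}{4\sqrt{2}}.$$
   Context: Triples are regarded as row vectors and $\top$ denotes transpose. The triple $B^n(3,4,5)^\top$ is a primitive Pythagorean triple (positive integers $x,y,z$ with $x^2+y^2=z^2$), so the triangle is a right triangle with hypotenuse $z$. *)

theory Defs
  imports "HOL-Analysis.Analysis"
begin

definition Bmat :: "int ^ 3 ^ 3" where
  "Bmat = vector [vector [1, 2, 2], vector [2, 1, 2], vector [2, 2, 3]]"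

fun mpow :: "'a::comm_ring_1 ^ 'n ^ 'n \<Rightarrow> nat \<Rightarrow> 'a ^ 'n ^ 'n" where
  "mpow A 0 = mat 1"
| "mpow A (Suc n) = A ** mpow A n"

definition inradius :: "real \<Rightarrow> real \<Rightarrow> real \<Rightarrow> real" where
  "inradius a b c = (let s = (a + b + c) / 2 in
      sqrt (s * (s - a) * (s - b) * (s - c)) / s)"

end

theory Submission
  imports Defs
begin

text \<open>The inradius of a right triangle with legs \<open>x, y\<close> and hypotenuse \<open>z\<close> is
  \<open>(x + y - z) / 2\<close>, and \<open>B\<close> turns \<open>x + y - z\<close> into the old \<open>x + y + z\<close> and
  \<open>x + y + z\<close> into \<open>6 (x + y + z) - (x + y - z)\<close>. So along the orbit of \<open>(3, 4, 5)\<close>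
  both sums run through twice the balancing numbers \<open>0, 1, 6, 35, 204, \<dots>\<close>, whose
  Binet formula has the roots \<open>3 \<plusminus> 2 sqrt 2\<close> of \<open>t\<^sup>2 = 6 t - 1\<close>.\<close>

lemma inradius_right_triangle:
  fixes x y z :: real
  assumes "x > 0" "y > 0" "z > 0" "x\<^sup>2 + y\<^sup>2 = z\<^sup>2"
  shows "inradius x y z = (x + y - z) / 2"
proof -
  let ?s = "(x + y + z) / 2"
  have "?s * (?s - x) * (?s - y) * (?s - z) = ((x + y)\<^sup>2 - z\<^sup>2) * (z\<^sup>2 - (x - y)\<^sup>2) / 16"
    unfolding power2_eq_square by (simp add: divide_simps) algebra
  also have "\<dots> = (x * y / 2)\<^sup>2"
  proof -
    have "(x + y)\<^sup>2 - z\<^sup>2 = 2 * x * y" "z\<^sup>2 - (x - y)\<^sup>2 = 2 * x * y"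
      using assms(4) by (simp_all add: power2_eq_square algebra_simps)
    then show ?thesis
      by (simp add: power2_eq_square)
  qed
  finally have area: "sqrt (?s * (?s - x) * (?s - y) * (?s - z)) = x * y / 2"
    using assms by simp
  have "(x + y - z) * (x + y + z) = 2 * x * y"
    using assms(4) by (simp add: power2_eq_square algebra_simps)
  then have "x * y / 2 / ?s = (x + y - z) / 2"
    using assms by (simp add: field_simps)
  then show ?thesis
    unfolding inradius_def Let_def area .
qed

fun balancing :: "nat \<Rightarrow> int" where
  "balancing 0 = 0"
| "balancing (Suc 0) = 1"
| "balancing (Suc (Suc n)) = 6 * balancing (Suc n) - balancing n"

lemma power_Suc_Suc_eq_linear_recurrence:
  fixes a p q :: "'a::comm_ring_1"
  assumes "a\<^sup>2 = p * a - q"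
  shows "a ^ Suc (Suc n) = p * a ^ Suc n - q * a ^ n"
proof -
  have "a ^ Suc (Suc n) = a\<^sup>2 * a ^ n"
    by (simp add: power2_eq_square)
  then show ?thesis
    by (simp add: assms algebra_simps)
qed

lemma balancing_closed_form:
  "real_of_int (balancing n) =
    ((3 + 2 * sqrt 2) ^ n - (3 - 2 * sqrt 2) ^ n) / (4 * sqrt 2)"
proof (induction n rule: balancing.induct)
  case 1
  then show ?case by simp
next
  case 2
  then show ?case by simp
next
  case (3 n)
  let ?a = "3 + 2 * sqrt 2" and ?b = "3 - 2 * sqrt 2"
  have "?a\<^sup>2 = 6 * ?a - 1" "?b\<^sup>2 = 6 * ?b - 1"
    by (simp_all add: power2_eq_square algebra_simps)
  then have "?a ^ Suc (Suc n) - ?b ^ Suc (Suc n) =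
      6 * (?a ^ Suc n - ?b ^ Suc n) - (?a ^ n - ?b ^ n)"
    by (simp only: power_Suc_Suc_eq_linear_recurrence) (simp add: algebra_simps)
  then show ?case
    using 3 by (simp add: diff_divide_distrib)
qed

definition pythagorean_triple :: "int ^ 3 \<Rightarrow> bool" where
  "pythagorean_triple u \<longleftrightarrow>
    u $ 1 > 0 \<and> u $ 2 > 0 \<and> u $ 3 > 0 \<and> (u $ 1)\<^sup>2 + (u $ 2)\<^sup>2 = (u $ 3)\<^sup>2"

lemma Bmat_mult_vector_nth:
  "(Bmat *v u) $ 1 = u $ 1 + 2 * u $ 2 + 2 * u $ 3"
  "(Bmat *v u) $ 2 = 2 * u $ 1 + u $ 2 + 2 * u $ 3"
  "(Bmat *v u) $ 3 = 2 * u $ 1 + 2 * u $ 2 + 3 * u $ 3"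
  by (simp_all add: matrix_vector_mult_def sum_3 Bmat_def)

lemma pythagorean_triple_Bmat_mult_vector:
  assumes "pythagorean_triple u"
  shows "pythagorean_triple (Bmat *v u)"
  using assms unfolding pythagorean_triple_def Bmat_mult_vector_nth
  by (simp add: power2_eq_square algebra_simps)

lemma Bmat_mult_vector_sums:
  "(Bmat *v u) $ 1 + (Bmat *v u) $ 2 - (Bmat *v u) $ 3 = u $ 1 + u $ 2 + u $ 3"
  "(Bmat *v u) $ 1 + (Bmat *v u) $ 2 + (Bmat *v u) $ 3 =
    6 * (u $ 1 + u $ 2 + u $ 3) - (u $ 1 + u $ 2 - u $ 3)"
  unfolding Bmat_mult_vector_nth by simp_all

lemma mpow_Suc_mult_vector: "mpow A (Suc n) *v u = A *v (mpow A n *v u)"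
  by (simp add: matrix_vector_mul_assoc)

lemma Bmat_orbit_3_4_5:
  defines "v \<equiv> \<lambda>n. mpow Bmat n *v (vector [3, 4, 5] :: int ^ 3)"
  shows "pythagorean_triple (v n) \<and>
    v n $ 1 + v n $ 2 - v n $ 3 = 2 * balancing (Suc n) \<and>
    v n $ 1 + v n $ 2 + v n $ 3 = 2 * balancing (Suc (Suc n))"
proof (induction n)
  case 0
  then show ?case
    by (simp add: v_def pythagorean_triple_def)
next
  case (Suc n)
  have "v (Suc n) = Bmat *v v n"
    by (simp only: v_def mpow_Suc_mult_vector)
  then show ?case
    using Suc pythagorean_triple_Bmat_mult_vector by (simp add: Bmat_mult_vector_sums)
qed

theorem mainTheorem4:
  fixes n :: nat
  assumes "n \<ge> 1"
  defines "v \<equiv> mpow Bmat n *v (vector [3, 4, 5] :: int ^ 3)"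
  shows "inradius (of_int (v $ 1)) (of_int (v $ 2)) (of_int (v $ 3)) =
    ((3 + 2 * sqrt 2) ^ (n + 1) - (3 - 2 * sqrt 2) ^ (n + 1)) / (4 * sqrt 2)"
proof -
  have pyth: "pythagorean_triple v" and diff: "v $ 1 + v $ 2 - v $ 3 = 2 * balancing (Suc n)"
    using Bmat_orbit_3_4_5 [of n] unfolding v_def by auto
  have "(real_of_int (v $ 1))\<^sup>2 + (real_of_int (v $ 2))\<^sup>2 = (real_of_int (v $ 3))\<^sup>2"
    using pyth unfolding pythagorean_triple_def by (metis of_int_add of_int_power)
  then have "inradius (of_int (v $ 1)) (of_int (v $ 2)) (of_int (v $ 3)) =
      real_of_int (v $ 1 + v $ 2 - v $ 3) / 2"
    using pyth unfolding pythagorean_triple_def by (simp add: inradius_right_triangle)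
  also have "\<dots> = real_of_int (balancing (n + 1))"
    using diff by simp
  finally show ?thesis
    by (simp only: balancing_closed_form)
qed

end
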